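(* Let $X,Y$ be real Hilbert spaces, let $K\subset X$ be a nonempty closed convex cone, and let $j:Y\times K\to\mathbb{R}$ be such that for every $\eta\in Y$ the function $j(\eta,\cdot):K\to\mathbb{R}$ is convex, positively homogeneous and Lipschitz continuous. Let $I$ be either $[0,T]$ ($T>0$) or $[0,+\infty)$, let $f:I\to X$, $\eta\in Y$, $u,z\in X$ and $t\in I$. Then $$u\in K\ \text{ and }\ j(\eta,v)-j(\eta,u)\ge (f(t)-z,v-u)_X\ \ \forall v\in K \quad\Longleftrightarrow\quad -u\in \mathrm{N}_{C(\eta,t)}(z).$$
   Context: Define $J:Y\times X\to(-\infty,+\infty]$ by $J(\eta,v)=j(\eta,v)$ if $v\in K$ and $J(\eta,v)=+\infty$ otherwise; $C(\eta)=\{\xi\in X: J(\eta,v)\ge(\xi,v)_X\ \forall v\in X\}$ and $C(\eta,t)=f(t)-C(\eta)$. For a nonempty closed convex set $D\subset X$, $\mathrm{N}_D(x)=\{\xi\in X:(\xi,w-x)_X\le 0\ \forall w\in D\}$ if $x\in D$, and $\mathrm{N}_D(x)=\emptyset$ if $x\notin D$. *)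

theory Defs
  imports "HOL-Analysis.Analysis" "HOL-Library.Extended_Real"
begin

definition Jfun :: "('y \<Rightarrow> 'x \<Rightarrow> real) \<Rightarrow> 'x set \<Rightarrow> 'y \<Rightarrow> 'x \<Rightarrow> ereal" where
  "Jfun j K \<eta> v = (if v \<in> K then ereal (j \<eta> v) else \<infinity>)"

definition Cset :: "('y \<Rightarrow> 'x::real_inner \<Rightarrow> real) \<Rightarrow> 'x set \<Rightarrow> 'y \<Rightarrow> 'x set" where
  "Cset j K \<eta> = {\<xi>. \<forall>v. Jfun j K \<eta> v \<ge> ereal (inner \<xi> v)}"

definition Ct :: "('y \<Rightarrow> 'x::real_inner \<Rightarrow> real) \<Rightarrow> 'x set \<Rightarrow> (real \<Rightarrow> 'x) \<Rightarrow> 'y \<Rightarrow> real \<Rightarrow> 'x set" where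
  "Ct j K f \<eta> t = {f t - \<xi> | \<xi>. \<xi> \<in> Cset j K \<eta>}"

definition normal_cone :: "'x::real_inner set \<Rightarrow> 'x \<Rightarrow> 'x set" where
  "normal_cone D x = (if x \<in> D then {\<xi>. \<forall>w\<in>D. inner \<xi> (w - x) \<le> 0} else {})"

end

theory Submission
  imports Defs
begin

text \<open>Write \<open>g = j \<eta>\<close>, \<open>w = f t - z\<close> and \<open>M = C(\<eta>)\<close>, the set of linear minorants of \<open>g\<close>
on \<open>K\<close>. Then \<open>-u \<in> N_{C(\<eta>,t)}(z)\<close> says that \<open>w \<in> M\<close> maximises \<open>\<xi> \<mapsto> (u, \<xi>)\<close> on \<open>M\<close>.
Testing the variational inequality with \<open>v = 0\<close> and \<open>v = 2u\<close> shows, by positive homogeneity,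
that it amounts to \<open>u \<in> K\<close>, \<open>w \<in> M\<close> and \<open>g u = (w, u)\<close>. Maximality of \<open>w\<close> forces \<open>u \<in> K\<close>,
since otherwise an element \<open>a\<close> of the dual cone separating \<open>u\<close> from \<open>K\<close> makes \<open>w - a\<close> a better
candidate; and it forces \<open>g u = (w, u)\<close>, since \<open>g\<close> is the supremum of its linear minorants,
as one sees by separating \<open>(u, r)\<close>, \<open>r < g u\<close>, from the closed convex epigraph of \<open>g\<close>. In a
Hilbert space both separations come from nearest points, which exist by the parallelogram law.
Lipschitz continuity is only needed to make the epigraph closed.\<close>

lemma parallelogram_law:
  fixes a b :: "'a::real_inner"
  shows "(norm (a + b))\<^sup>2 + (norm (a - b))\<^sup>2 = 2 * (norm a)\<^sup>2 + 2 * (norm b)\<^sup>2"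
  by (simp add: power2_norm_eq_inner inner_add_left inner_add_right
      inner_diff_left inner_diff_right inner_commute)

lemma convex_dist_sq_le_infdist:
  fixes S :: "'a::real_inner set"
  assumes "convex S" "a \<in> S" "b \<in> S"
  shows "(dist a b)\<^sup>2 \<le> 2 * (dist x a)\<^sup>2 + 2 * (dist x b)\<^sup>2 - 4 * (infdist x S)\<^sup>2"
proof -
  define m where "m = (1/2) *\<^sub>R a + (1/2) *\<^sub>R b"
  have "m \<in> S"
    using convexD[OF assms, of "1/2" "1/2"] by (simp add: m_def)
  then have "(infdist x S)\<^sup>2 \<le> (dist x m)\<^sup>2"
    by (simp add: infdist_le infdist_nonneg power_mono)
  moreover have "(x - a) + (x - b) = 2 *\<^sub>R (x - m)" and "(x - a) - (x - b) = b - a"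
    by (simp_all add: m_def algebra_simps scaleR_2)
  then have "(norm (b - a))\<^sup>2 = 2 * (dist x a)\<^sup>2 + 2 * (dist x b)\<^sup>2 - 4 * (dist x m)\<^sup>2"
    using parallelogram_law[of "x - a" "x - b"]
    by (simp add: dist_norm power_mult_distrib)
  ultimately show ?thesis
    by (simp add: dist_norm norm_minus_commute)
qed

lemma infdist_approx_sequence:
  assumes "A \<noteq> {}"
  obtains y where "\<And>n. y n \<in> A" "(\<lambda>n. dist x (y n)) \<longlonglongrightarrow> infdist x A"
proof -
  have "\<exists>a\<in>A. dist x a < infdist x A + 1 / Suc n" for n
    using cINF_less_iff[OF assms bdd_below_image_dist, of x "infdist x A + 1 / Suc n"]
    by (simp add: infdist_notempty[OF assms])
  then obtain y where y: "\<And>n. y n \<in> A" "\<And>n. dist x (y n) < infdist x A + 1 / Suc n"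
    by metis
  have upper: "(\<lambda>n. infdist x A + 1 / Suc n) \<longlonglongrightarrow> infdist x A"
    using tendsto_add[OF tendsto_const LIMSEQ_Suc[OF lim_const_over_n]] by simp
  have "(\<lambda>n. dist x (y n)) \<longlonglongrightarrow> infdist x A"
  proof (rule real_tendsto_sandwich[OF _ _ tendsto_const upper])
    show "\<forall>\<^sub>F n in sequentially. infdist x A \<le> dist x (y n)"
      by (intro always_eventually allI infdist_le y(1))
    show "\<forall>\<^sub>F n in sequentially. dist x (y n) \<le> infdist x A + 1 / Suc n"
      by (intro always_eventually allI less_imp_le y(2))
  qed
  with y(1) show ?thesis by (rule that)
qed

lemma convex_distance_attains_inf:
  fixes S :: "'a::{real_inner, complete_space} set"
  assumes "closed S" "convex S" "S \<noteq> {}"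
  obtains p where "p \<in> S" "\<And>w. w \<in> S \<Longrightarrow> dist x p \<le> dist x w"
proof -
  define d where "d = infdist x S"
  obtain y where yS: "\<And>n. y n \<in> S" and yd: "(\<lambda>n. dist x (y n)) \<longlonglongrightarrow> d"
    using infdist_approx_sequence[OF assms(3)] unfolding d_def by metis
  define e where "e = (\<lambda>n. (dist x (y n))\<^sup>2 - d\<^sup>2)"
  have e0: "e \<longlonglongrightarrow> 0"
    unfolding e_def using tendsto_diff[OF tendsto_power[OF yd, of 2] tendsto_const[of "d\<^sup>2"]]
    by simp
  have "Cauchy y"
  proof (rule metric_CauchyI)
    fix \<epsilon> :: real assume "\<epsilon> > 0"
    then have "\<forall>\<^sub>F n in sequentially. e n < \<epsilon>\<^sup>2 / 4"
      using order_tendstoD(2)[OF e0, of "\<epsilon>\<^sup>2 / 4"] by simp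
    then obtain N where N: "\<And>n. n \<ge> N \<Longrightarrow> e n < \<epsilon>\<^sup>2 / 4"
      by (auto simp: eventually_sequentially)
    have "dist (y m) (y n) < \<epsilon>" if "m \<ge> N" "n \<ge> N" for m n
    proof -
      have "(dist (y m) (y n))\<^sup>2 \<le> 2 * e m + 2 * e n"
        using convex_dist_sq_le_infdist[OF assms(2) yS yS, of m n x] by (simp add: e_def d_def)
      also have "\<dots> < \<epsilon>\<^sup>2"
        using N[OF that(1)] N[OF that(2)] by simp
      finally show ?thesis
        using \<open>\<epsilon> > 0\<close> by (simp add: power_less_imp_less_base)
    qed
    then show "\<exists>M. \<forall>m\<ge>M. \<forall>n\<ge>M. dist (y m) (y n) < \<epsilon>" by blast
  qed
  then obtain p where yp: "y \<longlonglongrightarrow> p"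
    using Cauchy_convergent_iff convergent_def by blast
  have "dist x p = d"
    using tendsto_unique[OF _ tendsto_dist[OF tendsto_const yp] yd] by simp
  then show ?thesis
    using that closed_sequentially[OF assms(1) yS yp] infdist_le unfolding d_def by metis
qed

lemma separating_hyperplane_closed_point_complete:
  fixes z :: "'a::{real_inner, complete_space}"
  assumes "convex S" "closed S" "z \<notin> S"
  shows "\<exists>a b. inner a z < b \<and> (\<forall>x\<in>S. inner a x > b)"
proof (cases "S = {}")
  case False
  obtain y where "y \<in> S" and y: "\<And>x. x \<in> S \<Longrightarrow> dist z y \<le> dist z x"
    using convex_distance_attains_inf[OF assms(2,1) False] by metis
  define a where "a = y - z"
  have closest: "inner a y \<le> inner a x" if "x \<in> S" for x
  proof (rule ccontr)
    assume "\<not> ?thesis"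
    then have "inner (z - y) (x - y) > 0"
      by (simp add: a_def inner_diff_left inner_diff_right algebra_simps)
    then obtain u where "u > 0" "u \<le> 1" "dist (y + u *\<^sub>R (x - y)) z < dist y z"
      using closer_point_lemma by blast
    then show False
      using y[of "y + u *\<^sub>R (x - y)"] convexD_alt[OF assms(1) \<open>y \<in> S\<close> \<open>x \<in> S\<close>]
      by (auto simp: dist_commute algebra_simps)
  qed
  have y_eq: "inner a y = inner a z + inner a a"
    by (simp add: a_def inner_diff_right)
  have a_pos: "inner a a > 0"
    using \<open>y \<in> S\<close> assms(3) by (auto simp: a_def)
  show ?thesis
  proof (intro exI[of _ a] exI[of _ "inner a z + inner a a / 2"] conjI ballI)
    show "inner a z < inner a z + inner a a / 2"
      using a_pos by simp
    show "inner a z + inner a a / 2 < inner a x" if "x \<in> S" for x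
      using closest[OF that] y_eq a_pos by linarith
  qed
qed (simp add: gt_ex)

lemma cone_pos_homogeneous_nonneg:
  fixes F :: "'a::real_vector \<Rightarrow> real"
  assumes "cone K" "v \<in> K"
    and bounded: "\<And>w. w \<in> K \<Longrightarrow> m \<le> F w"
    and homogeneous: "\<And>c. c > 0 \<Longrightarrow> F (c *\<^sub>R v) = c * F v"
  shows "F v \<ge> 0"
proof (rule ccontr)
  assume "\<not> F v \<ge> 0"
  then have neg: "F v < 0" by simp
  define c where "c = (\<bar>m\<bar> + 1) / - F v"
  have "c > 0" using neg by (simp add: c_def divide_pos_neg)
  then have "m \<le> F (c *\<^sub>R v)"
    using bounded mem_cone[OF assms(1,2)] by simp
  also have "\<dots> = - (\<bar>m\<bar> + 1)"
    using homogeneous[OF \<open>c > 0\<close>] neg by (simp add: c_def)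
  finally show False by linarith
qed

lemma closed_convex_cone_dual_separation:
  fixes K :: "'a::{real_inner, complete_space} set"
  assumes "closed K" "convex K" "cone K" "K \<noteq> {}" "u \<notin> K"
  obtains a where "\<And>v. v \<in> K \<Longrightarrow> inner a v \<ge> 0" "inner a u < 0"
proof -
  obtain a b where ab: "inner a u < b" "\<And>v. v \<in> K \<Longrightarrow> b < inner a v"
    using separating_hyperplane_closed_point_complete[OF assms(2,1,5)] by blast
  have "inner a v \<ge> 0" if "v \<in> K" for v
    using cone_pos_homogeneous_nonneg[OF assms(3) that, of b "inner a"] ab(2)
    by (simp add: less_imp_le)
  moreover have "b < 0"
    using ab(2) cone_contains_0[OF assms(3)] assms(4) by force
  ultimately show ?thesis
    using that[of a] ab(1) by fastforce
qed

lemma closed_epigraph: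
  assumes "closed S" "continuous_on S f"
  shows "closed (epigraph S f)"
proof -
  have epigraph_eq: "epigraph S f = {xy \<in> S \<times> UNIV. f (fst xy) \<le> snd xy}"
    by (auto simp: epigraph_def)
  show ?thesis
    unfolding epigraph_eq
    by (rule continuous_on_closed_Collect_le)
     (auto intro!: continuous_intros continuous_on_compose2[OF assms(2)] closed_Times assms(1))
qed

lemma pos_homogeneous_zero:
  fixes g :: "'a::real_vector \<Rightarrow> real"
  assumes "0 \<in> K" "\<And>c v. v \<in> K \<Longrightarrow> c > 0 \<Longrightarrow> g (c *\<^sub>R v) = c * g v"
  shows "g 0 = (0::real)"
  using assms(2)[OF assms(1), of 2] by simp

definition linear_minorants :: "'a::real_inner set \<Rightarrow> ('a \<Rightarrow> real) \<Rightarrow> 'a set" where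
  "linear_minorants K g = {\<xi>. \<forall>v\<in>K. inner \<xi> v \<le> g v}"

lemma Cset_eq_linear_minorants: "Cset j K \<eta> = linear_minorants K (j \<eta>)"
  by (auto simp: Cset_def Jfun_def linear_minorants_def)

lemma exists_linear_minorant_gt:
  fixes K :: "'a::{real_inner, complete_space} set"
  assumes "closed K" "cone K" "K \<noteq> {}" "convex_on K g" "continuous_on K g"
    and pos_hom: "\<And>c v. v \<in> K \<Longrightarrow> c > 0 \<Longrightarrow> g (c *\<^sub>R v) = c * g v"
    and "u \<in> K" "r < g u"
  obtains \<xi> where "\<xi> \<in> linear_minorants K g" "r < inner \<xi> u"
proof -
  have "0 \<in> K"
    using cone_contains_0[OF assms(2)] assms(3) by simp
  then have g0: "g 0 = 0"
    using pos_homogeneous_zero pos_hom by blast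
  have "(0, 0) \<in> epigraph K g" "(u, r) \<notin> epigraph K g"
    using \<open>0 \<in> K\<close> g0 \<open>r < g u\<close> by (auto simp: mem_epigraph)
  then obtain p \<alpha> b where below: "inner p u + \<alpha> * r < b"
    and above: "\<And>w s. (w, s) \<in> epigraph K g \<Longrightarrow> b < inner p w + \<alpha> * s"
    using separating_hyperplane_closed_point_complete[of "epigraph K g" "(u, r)"]
      convex_epigraphI[OF assms(4)] closed_epigraph[OF assms(1,5)]
    by (metis inner_Pair inner_real_def mult.commute surj_pair)
  have "b < 0"
    using above[OF \<open>(0, 0) \<in> epigraph K g\<close>] by simp
  have nonneg: "inner p v + \<alpha> * g v \<ge> 0" if "v \<in> K" for v
  proof (rule cone_pos_homogeneous_nonneg[OF assms(2) that, of b])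
    show "b \<le> inner p w + \<alpha> * g w" if "w \<in> K" for w
      using above[of w "g w"] that by (simp add: mem_epigraph less_imp_le)
    show "inner p (c *\<^sub>R v) + \<alpha> * g (c *\<^sub>R v) = c * (inner p v + \<alpha> * g v)" if "c > 0" for c
      using pos_hom[OF \<open>v \<in> K\<close> that] by (simp add: algebra_simps)
  qed
  have "\<alpha> * (g u - r) > 0"
    using nonneg[OF \<open>u \<in> K\<close>] below \<open>b < 0\<close> by (simp add: algebra_simps)
  then have "\<alpha> > 0"
    using \<open>r < g u\<close> by (simp add: zero_less_mult_iff)
  show ?thesis
  proof (rule that[of "- (1 / \<alpha>) *\<^sub>R p"])
    show "- (1 / \<alpha>) *\<^sub>R p \<in> linear_minorants K g"
      unfolding linear_minorants_def
    proof (intro CollectI ballI)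
      show "inner (- (1 / \<alpha>) *\<^sub>R p) v \<le> g v" if "v \<in> K" for v
        using nonneg[OF that] \<open>\<alpha> > 0\<close> by (simp add: field_simps)
    qed
    show "r < inner (- (1 / \<alpha>) *\<^sub>R p) u"
      using below \<open>b < 0\<close> \<open>\<alpha> > 0\<close> by (simp add: field_simps)
  qed
qed

lemma neg_mem_normal_cone_reflection:
  fixes C :: "'a::real_inner set"
  shows "- u \<in> normal_cone {a - \<xi> | \<xi>. \<xi> \<in> C} z
    \<longleftrightarrow> a - z \<in> C \<and> (\<forall>\<xi>\<in>C. inner u \<xi> \<le> inner u (a - z))"
proof -
  have "z \<in> {a - \<xi> | \<xi>. \<xi> \<in> C} \<longleftrightarrow> a - z \<in> C"
    by (force simp: algebra_simps)
  moreover have "inner (- u) ((a - \<xi>) - z) \<le> 0 \<longleftrightarrow> inner u \<xi> \<le> inner u (a - z)" for \<xi>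
    unfolding inner_minus_left inner_diff_right by linarith
  ultimately show ?thesis
    unfolding normal_cone_def by auto
qed

lemma variational_inequality_iff_minorant:
  fixes g :: "'a::real_inner \<Rightarrow> real"
  assumes "cone K" "u \<in> K"
    and pos_hom: "\<And>c v. v \<in> K \<Longrightarrow> c > 0 \<Longrightarrow> g (c *\<^sub>R v) = c * g v"
  shows "(\<forall>v\<in>K. inner w (v - u) \<le> g v - g u)
    \<longleftrightarrow> w \<in> linear_minorants K g \<and> g u = inner w u"
proof
  assume vi: "\<forall>v\<in>K. inner w (v - u) \<le> g v - g u"
  have "0 \<in> K" "2 *\<^sub>R u \<in> K"
    using mem_cone[OF assms(1,2), of 0] mem_cone[OF assms(1,2), of 2] by simp_all
  then have "g u \<le> inner w u" "inner w u \<le> g u"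
    using vi pos_homogeneous_zero[OF \<open>0 \<in> K\<close> pos_hom] pos_hom[OF \<open>u \<in> K\<close>, of 2]
    by (force simp: inner_diff_right scaleR_2 inner_add_right)+
  then show "w \<in> linear_minorants K g \<and> g u = inner w u"
    using vi by (auto simp: linear_minorants_def inner_diff_right)
qed (auto simp: linear_minorants_def inner_diff_right)

lemma maximizer_over_linear_minorants_iff:
  fixes K :: "'a::{real_inner, complete_space} set"
  assumes "closed K" "cone K" "K \<noteq> {}" "convex_on K g" "continuous_on K g"
    and pos_hom: "\<And>c v. v \<in> K \<Longrightarrow> c > 0 \<Longrightarrow> g (c *\<^sub>R v) = c * g v"
  shows "w \<in> linear_minorants K g \<and> (\<forall>\<xi>\<in>linear_minorants K g. inner u \<xi> \<le> inner u w)
    \<longleftrightarrow> u \<in> K \<and> w \<in> linear_minorants K g \<and> g u = inner w u"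
    (is "w \<in> ?M \<and> ?max \<longleftrightarrow> _")
proof
  assume w: "w \<in> ?M \<and> ?max"
  show "u \<in> K \<and> w \<in> ?M \<and> g u = inner w u"
  proof (intro conjI)
    show "u \<in> K"
    proof (rule ccontr)
      assume "u \<notin> K"
      then obtain a where "\<And>v. v \<in> K \<Longrightarrow> inner a v \<ge> 0" "inner a u < 0"
        using closed_convex_cone_dual_separation[OF assms(1) convex_on_imp_convex[OF assms(4)]
            assms(2,3)] by blast
      moreover have "w - a \<in> ?M"
        using w calculation(1) by (force simp: linear_minorants_def inner_diff_left)
      ultimately show False
        using w by (force simp: inner_diff_right inner_commute)
    qed
    show "w \<in> ?M" using w ..
    show "g u = inner w u"
    proof (rule ccontr)
      assume "g u \<noteq> inner w u"
      then have "inner w u < g u"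
        using w \<open>u \<in> K\<close> by (force simp: linear_minorants_def)
      then obtain \<xi> where "\<xi> \<in> ?M" "inner w u < inner \<xi> u"
        using exists_linear_minorant_gt[OF assms \<open>u \<in> K\<close>] by blast
      then show False
        using w by (force simp: inner_commute)
    qed
  qed
qed (auto simp: linear_minorants_def inner_commute)

theorem lemma3p1:
  fixes K :: "'x::{real_inner, complete_space} set"
    and j :: "'y::{real_inner, complete_space} \<Rightarrow> 'x \<Rightarrow> real"
    and I :: "real set" and T :: real
    and f :: "real \<Rightarrow> 'x" and \<eta> :: 'y and u z :: 'x and t :: real
  assumes K_ne: "K \<noteq> {}" and K_closed: "closed K" and K_convex: "convex K" and K_cone: "cone K"
    and j_convex: "\<And>\<eta>. convex_on K (j \<eta>)"
    and j_poshom: "\<And>\<eta> c v. v \<in> K \<Longrightarrow> c > 0 \<Longrightarrow> j \<eta> (c *\<^sub>R v) = c * j \<eta> v"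
    and j_lip: "\<And>\<eta>. \<exists>L. L-lipschitz_on K (j \<eta>)"
    and I_def: "(T > 0 \<and> I = {0..T}) \<or> I = {0..}"
    and t_in: "t \<in> I"
  shows "(u \<in> K \<and> (\<forall>v\<in>K. j \<eta> v - j \<eta> u \<ge> inner (f t - z) (v - u)))
         \<longleftrightarrow> - u \<in> normal_cone (Ct j K f \<eta> t) z"
proof -
  have "continuous_on K (j \<eta>)"
    using j_lip lipschitz_on_continuous_on by blast
  then have "- u \<in> normal_cone (Ct j K f \<eta> t) z
      \<longleftrightarrow> u \<in> K \<and> f t - z \<in> linear_minorants K (j \<eta>) \<and> j \<eta> u = inner (f t - z) u"
    unfolding Ct_def Cset_eq_linear_minorants neg_mem_normal_cone_reflection
    by (rule maximizer_over_linear_minorants_iff[OF K_closed K_cone K_ne j_convex _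
          j_poshom[where \<eta> = \<eta>]])
  moreover have "u \<in> K \<Longrightarrow> (\<forall>v\<in>K. j \<eta> v - j \<eta> u \<ge> inner (f t - z) (v - u))
      \<longleftrightarrow> f t - z \<in> linear_minorants K (j \<eta>) \<and> j \<eta> u = inner (f t - z) u"
    using variational_inequality_iff_minorant[OF K_cone _ j_poshom[where \<eta> = \<eta>]] by blast
  ultimately show ?thesis
    by blast
qed

end
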